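(* Let $V$ be a space. The following are equivalent: (i) $V$ is homothetic to $\langle 1,\tau\rangle_{\mathbb{Q}}$ for some $\tau$ with $|\tau|=1$; (ii) $V$ is homothetic to $\langle 1,\tau\rangle_{\mathbb{Q}}$ for some nonzero purely imaginary $\tau$; (iii) $V$ is homothetic to a space $V'$ with $V'=\overline{V'}$.
   Context: A space is a $2$-dimensional $\mathbb{Q}$-vector subspace $V\subset\mathbb{C}$ containing two $\mathbb{R}$-linearly independent vectors; $\langle 1,\tau\rangle_{\mathbb{Q}}=\mathbb{Q}+\mathbb{Q}\tau$. Spaces $V_1,V_2$ are homothetic if $V_2=\lambda V_1$ for some $\lambda\in\mathbb{C}^*$. $\overline{V}$ denotes the complex conjugate of $V$. *)

theory Defs
  imports "HOL-Analysis.Analysis"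
begin

definition qspan2 :: "complex \<Rightarrow> complex \<Rightarrow> complex set" where
  "qspan2 u w = {of_real (of_rat a) * u + of_real (of_rat b) * w | a b. True}"

definition R_indep :: "complex \<Rightarrow> complex \<Rightarrow> bool" where
  "R_indep u w \<longleftrightarrow> (\<forall>a b :: real. of_real a * u + of_real b * w = 0 \<longrightarrow> a = 0 \<and> b = 0)"

definition is_space :: "complex set \<Rightarrow> bool" where
  "is_space V \<longleftrightarrow>
     0 \<in> V \<and> (\<forall>x\<in>V. \<forall>y\<in>V. x + y \<in> V) \<and> (\<forall>q\<in>\<rat>. \<forall>x\<in>V. q * x \<in> V) \<and>
     (\<exists>u w. V = qspan2 u w \<and>
        (\<forall>a b. of_real (of_rat a) * u + of_real (of_rat b) * w = 0 \<longrightarrow> a = 0 \<and> b = 0)) \<and>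
     (\<exists>x\<in>V. \<exists>y\<in>V. R_indep x y)"

definition homothetic :: "complex set \<Rightarrow> complex set \<Rightarrow> bool" where
  "homothetic V1 V2 \<longleftrightarrow> (\<exists>c. c \<noteq> 0 \<and> V2 = (\<lambda>z. c * z) ` V1)"

end

theory Submission
  imports Defs
begin

text \<open>
  The Cayley transform \<open>\<tau> \<mapsto> (1 - \<tau>) / (1 + \<tau>)\<close> exchanges the unit circle and the
  imaginary axis, and since \<open>1 + \<tau>\<close> and \<open>1 - \<tau>\<close> span the same \<open>\<rat>\<close>-space as \<open>1\<close> and \<open>\<tau>\<close>,
  \<open>\<langle>1, \<tau>\<rangle> = (1 + \<tau>) \<langle>1, cayley \<tau>\<rangle>\<close>; this gives (i) \<open>\<Longleftrightarrow>\<close> (ii). For imaginary \<open>\<tau>\<close>,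
  \<open>\<langle>1, \<tau>\<rangle>\<close> is stable under conjugation. Conversely, a conjugation-stable space contains
  \<open>(z + cnj z) / 2\<close> and \<open>(z - cnj z) / 2\<close> for each of its elements \<open>z\<close>, hence a nonzero real
  \<open>a\<close> and a nonzero imaginary \<open>b\<close>. Being \<open>\<real>\<close>-independent they form a \<open>\<rat>\<close>-basis, so the
  space is \<open>\<langle>a, b\<rangle> = a \<langle>1, b / a\<rangle>\<close>.
\<close>

lemma mem_qspan2: "x \<in> qspan2 u w \<longleftrightarrow> (\<exists>a b. x = of_real (of_rat a) * u + of_real (of_rat b) * w)"
  by (auto simp: qspan2_def)

lemma qspan2_mono:
  assumes "a \<in> qspan2 u w" "b \<in> qspan2 u w"
  shows "qspan2 a b \<subseteq> qspan2 u w"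
proof
  fix x assume "x \<in> qspan2 a b"
  then obtain r s where x: "x = of_real (of_rat r) * a + of_real (of_rat s) * b"
    by (auto simp: mem_qspan2)
  obtain p q where a: "a = of_real (of_rat p) * u + of_real (of_rat q) * w"
    using assms(1) by (auto simp: mem_qspan2)
  obtain p' q' where b: "b = of_real (of_rat p') * u + of_real (of_rat q') * w"
    using assms(2) by (auto simp: mem_qspan2)
  have "x = of_real (of_rat (r*p + s*p')) * u + of_real (of_rat (r*q + s*q')) * w"
    unfolding x a b by (simp add: of_rat_mult of_rat_add algebra_simps)
  then show "x \<in> qspan2 u w" by (auto simp: mem_qspan2)
qed

lemma image_mult_qspan2: "(\<lambda>z. c * z) ` qspan2 u w = qspan2 (c * u) (c * w)"
  unfolding qspan2_def by (auto simp: image_iff, (metis mult.left_commute distrib_left)+)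

lemma qspan2_1_eq_image_mult:
  assumes "u \<noteq> 0"
  shows "qspan2 u w = (\<lambda>z. u * z) ` qspan2 1 (w / u)"
  using assms by (simp add: image_mult_qspan2)

lemma homothetic_image_mult: "c \<noteq> 0 \<Longrightarrow> homothetic V ((\<lambda>z. c * z) ` V)"
  by (auto simp: homothetic_def)

lemma homothetic_sym:
  assumes "homothetic V W"
  shows "homothetic W V"
proof -
  obtain c where "c \<noteq> 0" "W = (\<lambda>z. c * z) ` V"
    using assms by (auto simp: homothetic_def)
  then have "V = (\<lambda>z. inverse c * z) ` W"
    by (simp add: image_image mult.assoc[symmetric])
  with \<open>c \<noteq> 0\<close> show ?thesis
    unfolding homothetic_def by (intro exI[of _ "inverse c"]) simp
qed

lemma homothetic_trans:
  assumes "homothetic U V" "homothetic V W"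
  shows "homothetic U W"
proof -
  obtain c d where "c \<noteq> 0" "V = (\<lambda>z. c * z) ` U" "d \<noteq> 0" "W = (\<lambda>z. d * z) ` V"
    using assms by (auto simp: homothetic_def)
  then have "W = (\<lambda>z. (d * c) * z) ` U"
    by (simp add: image_image mult.assoc)
  with \<open>c \<noteq> 0\<close> \<open>d \<noteq> 0\<close> show ?thesis
    unfolding homothetic_def by (intro exI[of _ "d * c"]) simp
qed

lemma R_indep_mult: "R_indep x y \<Longrightarrow> c \<noteq> 0 \<Longrightarrow> R_indep (c * x) (c * y)"
  unfolding R_indep_def by (metis mult.left_commute mult_eq_0_iff distrib_left)

lemma R_indep_imp_Im_cnj_mult_neq_0:
  assumes "R_indep x y"
  shows "Im (cnj x * y) \<noteq> 0"
proof
  assume "Im (cnj x * y) = 0"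
  then have real: "cnj x * y = of_real (Re (cnj x * y))" by (simp add: complex_eq_iff)
  have "x \<noteq> 0"
  proof
    assume "x = 0"
    then have "of_real 1 * x + of_real 0 * y = 0" by simp
    with assms have "(1::real) = 0" unfolding R_indep_def by blast
    then show False by simp
  qed
  have "of_real (Re (cnj x * y)) * x = of_real ((cmod x)\<^sup>2) * y"
    by (simp only: real[symmetric] complex_norm_square) (simp add: algebra_simps)
  then have "of_real (Re (cnj x * y)) * x + of_real (- (cmod x)\<^sup>2) * y = 0"
    by (simp add: algebra_simps)
  with assms have "- (cmod x)\<^sup>2 = 0" unfolding R_indep_def by blast
  with \<open>x \<noteq> 0\<close> show False by simp
qed

lemma R_indep_real_imaginary:
  assumes "a \<in> \<real>" "a \<noteq> 0" "Re b = 0" "b \<noteq> 0"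
  shows "R_indep a b"
  using assms by (auto simp: R_indep_def complex_eq_iff elim!: Reals_cases)

lemma is_space_image_mult:
  assumes "is_space V" "c \<noteq> 0"
  shows "is_space ((\<lambda>z. c * z) ` V)"
proof -
  obtain u w where basis: "V = qspan2 u w"
    "\<forall>a b. of_real (of_rat a) * u + of_real (of_rat b) * w = 0 \<longrightarrow> a = 0 \<and> b = 0"
    using assms(1) unfolding is_space_def by blast
  obtain x y where "x \<in> V" "y \<in> V" "R_indep x y"
    using assms(1) unfolding is_space_def by blast
  then have indep: "\<exists>x\<in>(\<lambda>z. c * z) ` V. \<exists>y\<in>(\<lambda>z. c * z) ` V. R_indep x y"
    using R_indep_mult[OF _ assms(2)] by blast
  have "\<forall>a b. of_real (of_rat a) * (c * u) + of_real (of_rat b) * (c * w) = 0 \<longrightarrow> a = 0 \<and> b = 0"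
    using basis(2) assms(2) by (metis (no_types, lifting) distrib_left mult.left_commute mult_eq_0_iff)
  moreover have "(\<lambda>z. c * z) ` V = qspan2 (c * u) (c * w)"
    using basis(1) by (simp add: image_mult_qspan2)
  moreover have "0 \<in> (\<lambda>z. c * z) ` V"
    using assms(1) unfolding is_space_def by force
  moreover have "\<forall>x\<in>(\<lambda>z. c * z) ` V. \<forall>y\<in>(\<lambda>z. c * z) ` V. x + y \<in> (\<lambda>z. c * z) ` V"
    using assms(1) unfolding is_space_def by (auto simp: image_iff distrib_left[symmetric])
  moreover have "\<forall>q\<in>\<rat>. \<forall>x\<in>(\<lambda>z. c * z) ` V. q * x \<in> (\<lambda>z. c * z) ` V"
    using assms(1) unfolding is_space_def by (auto simp: image_iff mult.left_commute)
  ultimately show ?thesis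
    using indep unfolding is_space_def by blast
qed

lemma homothetic_is_space: "is_space V \<Longrightarrow> homothetic V W \<Longrightarrow> is_space W"
  by (auto simp: homothetic_def is_space_image_mult)

lemma is_space_not_subset_Reals:
  assumes "is_space V"
  obtains z where "z \<in> V" "Im z \<noteq> 0"
proof -
  obtain x y where "x \<in> V" "y \<in> V" "R_indep x y"
    using assms unfolding is_space_def by blast
  moreover have "Im (cnj x * y) = 0" if "Im x = 0" "Im y = 0"
    using that by simp
  ultimately show thesis
    using R_indep_imp_Im_cnj_mult_neq_0 that by blast
qed

lemma is_space_not_subset_imaginary:
  assumes "is_space V"
  obtains z where "z \<in> V" "Re z \<noteq> 0"
proof -
  obtain x y where "x \<in> V" "y \<in> V" "R_indep x y"
    using assms unfolding is_space_def by blast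
  moreover have "Im (cnj x * y) = 0" if "Re x = 0" "Re y = 0"
    using that by simp
  ultimately show thesis
    using R_indep_imp_Im_cnj_mult_neq_0 that by blast
qed

lemma is_space_qspan2_1_imp_Im_neq_0:
  assumes "is_space (qspan2 1 \<tau>)"
  shows "Im \<tau> \<noteq> 0"
proof
  assume "Im \<tau> = 0"
  then have "Im z = 0" if "z \<in> qspan2 1 \<tau>" for z
    using that by (auto simp: mem_qspan2)
  with is_space_not_subset_Reals[OF assms] show False by blast
qed

lemma cnj_qspan2_1_imaginary:
  assumes "Re \<tau> = 0"
  shows "cnj ` qspan2 1 \<tau> = qspan2 1 \<tau>"
proof -
  have cnj_mem: "cnj z \<in> qspan2 1 \<tau>" if z: "z \<in> qspan2 1 \<tau>" for z
  proof -
    obtain a b where "z = of_real (of_rat a) + of_real (of_rat b) * \<tau>"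
      using z by (auto simp: mem_qspan2)
    then have "cnj z = of_real (of_rat a) + of_real (of_rat (- b)) * \<tau>"
      using assms by (simp add: complex_eq_iff of_rat_minus)
    then show ?thesis by (auto simp: mem_qspan2)
  qed
  then have "qspan2 1 \<tau> \<subseteq> cnj ` qspan2 1 \<tau>"
    by (metis complex_cnj_cnj image_eqI subsetI)
  with cnj_mem show ?thesis by blast
qed

definition cayley :: "complex \<Rightarrow> complex" where
  "cayley \<tau> = (1 - \<tau>) / (1 + \<tau>)"

lemma cayley_eq_0_iff: "cayley \<tau> = 0 \<longleftrightarrow> \<tau> = 1 \<or> \<tau> = -1"
  by (auto simp: cayley_def add_eq_0_iff)

lemma Re_cayley_eq_0_if_norm_eq_1:
  assumes "cmod \<tau> = 1"
  shows "Re (cayley \<tau>) = 0"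
proof -
  have "(Re \<tau>)\<^sup>2 + (Im \<tau>)\<^sup>2 = 1"
    using assms by (simp add: cmod_def)
  then have "Re (1 - \<tau>) * Re (1 + \<tau>) + Im (1 - \<tau>) * Im (1 + \<tau>) = 0"
    by (simp add: power2_eq_square algebra_simps)
  then show ?thesis
    by (simp only: cayley_def Re_divide)
qed

lemma norm_cayley_eq_1_if_Re_eq_0:
  assumes "Re \<tau> = 0"
  shows "cmod (cayley \<tau>) = 1"
proof -
  have "cmod (1 - \<tau>) = cmod (1 + \<tau>)" "1 + \<tau> \<noteq> 0"
    using assms by (auto simp: cmod_def complex_eq_iff)
  then show ?thesis
    by (simp add: cayley_def norm_divide)
qed

lemma qspan2_1_plus_minus: "qspan2 (1 + \<tau>) (1 - \<tau>) = qspan2 1 \<tau>"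
proof
  show "qspan2 (1 + \<tau>) (1 - \<tau>) \<subseteq> qspan2 1 \<tau>"
  proof (rule qspan2_mono)
    show "1 + \<tau> \<in> qspan2 1 \<tau>"
      unfolding mem_qspan2 by (intro exI[of _ 1]) simp
    show "1 - \<tau> \<in> qspan2 1 \<tau>"
      unfolding mem_qspan2 by (intro exI[of _ 1] exI[of _ "-1"]) (simp add: of_rat_minus)
  qed
  show "qspan2 1 \<tau> \<subseteq> qspan2 (1 + \<tau>) (1 - \<tau>)"
  proof (rule qspan2_mono)
    show "1 \<in> qspan2 (1 + \<tau>) (1 - \<tau>)"
      unfolding mem_qspan2 by (intro exI[of _ "1/2"]) (simp add: of_rat_divide field_simps)
    show "\<tau> \<in> qspan2 (1 + \<tau>) (1 - \<tau>)"
      unfolding mem_qspan2 by (intro exI[of _ "1/2"] exI[of _ "-1/2"])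
        (simp add: of_rat_divide of_rat_minus field_simps)
  qed
qed

lemma homothetic_qspan2_cayley:
  assumes "\<tau> \<noteq> -1"
  shows "homothetic (qspan2 1 \<tau>) (qspan2 1 (cayley \<tau>))"
proof -
  have "1 + \<tau> \<noteq> 0"
    using assms by (simp add: add_eq_0_iff)
  then have "qspan2 1 \<tau> = (\<lambda>z. (1 + \<tau>) * z) ` qspan2 1 (cayley \<tau>)"
    by (simp add: cayley_def image_mult_qspan2 qspan2_1_plus_minus)
  with \<open>1 + \<tau> \<noteq> 0\<close> show ?thesis
    by (simp add: homothetic_image_mult homothetic_sym)
qed

lemma is_space_eq_qspan2_if_R_indep:
  assumes "is_space V" "a \<in> V" "b \<in> V" "R_indep a b"
  shows "V = qspan2 a b"
proof -
  obtain u w where V: "V = qspan2 u w"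
    using assms(1) unfolding is_space_def by blast
  obtain p1 q1 where a: "a = of_real (of_rat p1) * u + of_real (of_rat q1) * w"
    using assms(2) V by (auto simp: mem_qspan2)
  obtain p2 q2 where b: "b = of_real (of_rat p2) * u + of_real (of_rat q2) * w"
    using assms(3) V by (auto simp: mem_qspan2)
  \<comment> \<open>Cramer's rule for the coordinates of \<open>a\<close> and \<open>b\<close> with respect to \<open>u\<close> and \<open>w\<close>\<close>
  define D where "D = p1 * q2 - q1 * p2"
  have u: "of_real (of_rat q2) * a + of_real (of_rat (- q1)) * b = of_real (of_rat D) * u"
    unfolding a b D_def by (simp add: of_rat_mult of_rat_diff of_rat_minus algebra_simps)
  have w: "of_real (of_rat (- p2)) * a + of_real (of_rat p1) * b = of_real (of_rat D) * w"
    unfolding a b D_def by (simp add: of_rat_mult of_rat_diff of_rat_minus algebra_simps)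
  have "D \<noteq> 0"
  proof
    assume "D = 0"
    then have "of_real (of_rat q2) * a + of_real (of_rat (- q1)) * b = 0"
      "of_real (of_rat (- p2)) * a + of_real (of_rat p1) * b = 0"
      using u w by simp_all
    from this[THEN assms(4)[unfolded R_indep_def, rule_format]]
    have "q2 = 0" "q1 = 0" "p2 = 0" "p1 = 0"
      by simp_all
    then have "a = 0"
      by (simp add: a)
    with assms(4) show False
      using R_indep_imp_Im_cnj_mult_neq_0 by force
  qed
  have "u = of_real (of_rat (q2 / D)) * a + of_real (of_rat (- q1 / D)) * b"
    using u \<open>D \<noteq> 0\<close> by (simp add: of_rat_divide of_rat_minus field_simps)
  moreover have "w = of_real (of_rat (- p2 / D)) * a + of_real (of_rat (p1 / D)) * b"
    using w \<open>D \<noteq> 0\<close> by (simp add: of_rat_divide of_rat_minus field_simps)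
  ultimately have "V \<subseteq> qspan2 a b"
    unfolding V by (intro qspan2_mono) (auto simp: mem_qspan2)
  moreover have "qspan2 a b \<subseteq> V"
    unfolding V by (intro qspan2_mono) (use assms(2,3) V in auto)
  ultimately show ?thesis
    by blast
qed

lemma cnj_stable_space_homothetic_qspan2_imaginary:
  assumes "is_space V" "cnj ` V = V"
  obtains \<tau> where "\<tau> \<noteq> 0" "Re \<tau> = 0" "homothetic V (qspan2 1 \<tau>)"
proof -
  have half_mem: "(1/2) * (z + s * cnj z) \<in> V" if "z \<in> V" "s \<in> \<rat>" for z s
  proof -
    have "cnj z \<in> V"
      using assms(2) \<open>z \<in> V\<close> by blast
    then have "z + s * cnj z \<in> V"
      using assms(1) that unfolding is_space_def by blast
    moreover have "(1/2 :: complex) \<in> \<rat>"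
      by simp
    ultimately show ?thesis
      using assms(1) unfolding is_space_def by blast
  qed
  obtain z1 where "z1 \<in> V" "Re z1 \<noteq> 0"
    using is_space_not_subset_imaginary[OF assms(1)] .
  obtain z2 where "z2 \<in> V" "Im z2 \<noteq> 0"
    using is_space_not_subset_Reals[OF assms(1)] .
  define a where "a = complex_of_real (Re z1)"
  define b where "b = \<i> * complex_of_real (Im z2)"
  have "a = (1/2) * (z1 + 1 * cnj z1)" "b = (1/2) * (z2 + (-1) * cnj z2)"
    unfolding a_def b_def by (simp_all add: complex_eq_iff)
  then have "a \<in> V" "b \<in> V"
    using half_mem \<open>z1 \<in> V\<close> \<open>z2 \<in> V\<close> by (metis Rats_1, metis Rats_1 Rats_minus_iff)
  have "a \<in> \<real>" "a \<noteq> 0" "Re b = 0" "b \<noteq> 0"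
    unfolding a_def b_def using \<open>Re z1 \<noteq> 0\<close> \<open>Im z2 \<noteq> 0\<close> by simp_all
  then have "V = qspan2 a b"
    using is_space_eq_qspan2_if_R_indep[OF assms(1) \<open>a \<in> V\<close> \<open>b \<in> V\<close>] R_indep_real_imaginary
    by blast
  also have "\<dots> = (\<lambda>z. a * z) ` qspan2 1 (b / a)"
    using \<open>a \<noteq> 0\<close> by (rule qspan2_1_eq_image_mult)
  finally have "homothetic (qspan2 1 (b / a)) V"
    using \<open>a \<noteq> 0\<close> by (simp add: homothetic_image_mult)
  moreover have "b / a \<noteq> 0" "Re (b / a) = 0"
    unfolding a_def b_def using \<open>Re z1 \<noteq> 0\<close> \<open>Im z2 \<noteq> 0\<close> by simp_all
  ultimately show thesis
    using that homothetic_sym by blast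
qed

theorem lemma4p1:
  assumes "is_space V"
  shows "((\<exists>\<tau>. cmod \<tau> = 1 \<and> homothetic V (qspan2 1 \<tau>)) \<longleftrightarrow>
          (\<exists>\<tau>. \<tau> \<noteq> 0 \<and> Re \<tau> = 0 \<and> homothetic V (qspan2 1 \<tau>))) \<and>
         ((\<exists>\<tau>. \<tau> \<noteq> 0 \<and> Re \<tau> = 0 \<and> homothetic V (qspan2 1 \<tau>)) \<longleftrightarrow>
          (\<exists>V'. is_space V' \<and> homothetic V V' \<and> cnj ` V' = V'))"
proof -
  have unit_imp_imaginary: "\<exists>\<sigma>. \<sigma> \<noteq> 0 \<and> Re \<sigma> = 0 \<and> homothetic V (qspan2 1 \<sigma>)"
    if "cmod \<tau> = 1" "homothetic V (qspan2 1 \<tau>)" for \<tau>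
  proof -
    have "Im \<tau> \<noteq> 0"
      using assms that(2) homothetic_is_space is_space_qspan2_1_imp_Im_neq_0 by blast
    then have "\<tau> \<noteq> 1" "\<tau> \<noteq> -1"
      by auto
    then show ?thesis
      using that Re_cayley_eq_0_if_norm_eq_1 cayley_eq_0_iff homothetic_qspan2_cayley
        homothetic_trans by blast
  qed
  have imaginary_imp_unit: "\<exists>\<sigma>. cmod \<sigma> = 1 \<and> homothetic V (qspan2 1 \<sigma>)"
    if "Re \<tau> = 0" "homothetic V (qspan2 1 \<tau>)" for \<tau>
  proof -
    have "\<tau> \<noteq> -1"
      using that(1) by auto
    then show ?thesis
      using that norm_cayley_eq_1_if_Re_eq_0 homothetic_qspan2_cayley homothetic_trans by blast
  qed
  have imaginary_imp_cnj_stable: "\<exists>V'. is_space V' \<and> homothetic V V' \<and> cnj ` V' = V'"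
    if "Re \<tau> = 0" "homothetic V (qspan2 1 \<tau>)" for \<tau>
    using assms that homothetic_is_space cnj_qspan2_1_imaginary by blast
  have cnj_stable_imp_imaginary: "\<exists>\<tau>. \<tau> \<noteq> 0 \<and> Re \<tau> = 0 \<and> homothetic V (qspan2 1 \<tau>)"
    if "is_space V'" "homothetic V V'" "cnj ` V' = V'" for V'
    using that cnj_stable_space_homothetic_qspan2_imaginary homothetic_trans by metis
  show ?thesis
    using unit_imp_imaginary imaginary_imp_unit imaginary_imp_cnj_stable cnj_stable_imp_imaginary
    by blast
qed

end
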